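(* Let $\mathcal N\subseteq\mathcal X^2$ be a symmetric neighbor relation, $Q$ a probability measure on $\mathcal Z$, and $P_{Z|X}$ a Markov kernel with $P_{Z|X}(\cdot|x)\ll Q$ for all $x$. If $P_{Z|X}$ is $\varepsilon$-DP with respect to $\mathcal N$, then for every $\alpha>1$ the PPR-compressed mechanism $x\mapsto((Z_i)_{i\ge1},K)$ is $2\alpha\varepsilon$-DP with respect to $\mathcal N$; i.e., for all $(x,x')\in\mathcal N$ and all measurable $\mathcal S\subseteq\mathcal Z^{\infty}\times\mathbb Z_{>0}$, $\Pr(((Z_i)_i,K)\in\mathcal S\mid X=x)\le e^{2\alpha\varepsilon}\Pr(((Z_i)_i,K)\in\mathcal S\mid X=x')$.
   Context: A Markov kernel $P_{W|X}$ is $(\varepsilon,\delta)$-DP w.r.t. a symmetric relation $\mathcal N\subseteq\mathcal X^2$ if $\Pr(W\in S\mid X=x)\le e^{\varepsilon}\Pr(W\in S\mid X=x')+\delta$ for all $(x,x')\in\mathcal N$ and measurable $S$; $\varepsilon$-DP means $(\varepsilon,0)$-DP. PPR: let $Z_1,Z_2,\ldots$ be i.i.d. $\sim Q$, independent of the points $T_1\le T_2\le\cdots$ of a rate-$1$ Poisson process on $[0,\infty)$. For input $x$, with $P=P_{Z|X}(\cdot|x)$, set $\tilde T_i:=T_i(\frac{\mathrm dP}{\mathrm dQ}(Z_i))^{-1}$ ($:=\infty$ if the derivative is $0$, $\infty^{-\alpha}:=0$), and draw $K$ with $\Pr(K=k\mid (Z_i,T_i)_i)=\tilde T_k^{-\alpha}/\sum_i\tilde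 T_i^{-\alpha}$ (fresh randomness for each input). The PPR-compressed mechanism is the kernel $x\mapsto((Z_i)_{i\ge1},K)$; the shared sequence $(Z_i)$ does not depend on $x$. *)

theory Defs
  imports "HOL-Probability.Probability"
begin

definition dp_mech :: "('x \<times> 'x) set \<Rightarrow> ('x \<Rightarrow> 'a measure) \<Rightarrow> real \<Rightarrow> real \<Rightarrow> bool" where
  "dp_mech N M \<epsilon> \<delta> \<longleftrightarrow>
     (\<forall>(x, x') \<in> N. \<forall>S \<in> sets (M x).
        emeasure (M x) S \<le> ennreal (exp \<epsilon>) * emeasure (M x') S + ennreal \<delta>)"

definition exp1 :: "real measure" where
  "exp1 = density lborel (\<lambda>t. ennreal (exponential_density 1 t))"

text \<open>Points of the rate-1 Poisson process on [0,inf): T_i = E_0 + ... + E_i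
  with E_j i.i.d. Exp(1) (0-based indexing).\<close>
definition ppr_T :: "(nat \<Rightarrow> real) \<Rightarrow> nat \<Rightarrow> real" where
  "ppr_T e i = (\<Sum>j\<le>i. e j)"

text \<open>The weight  Ttilde_i^(-alpha) = (f(Z_i) / T_i)^alpha, where f = dP/dQ
  (this is 0 when f(Z_i) = 0, matching Ttilde_i = inf).\<close>
definition ppr_weight :: "('z \<Rightarrow> ennreal) \<Rightarrow> real \<Rightarrow> (nat \<Rightarrow> 'z) \<Rightarrow> (nat \<Rightarrow> real) \<Rightarrow> nat \<Rightarrow> real" where
  "ppr_weight f \<alpha> z e k = (enn2real (f (z k)) / ppr_T e k) powr \<alpha>"

text \<open>Law of the PPR-compressed output ((Z_i)_i, K): (Z_i) i.i.d. Q, Poisson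
  arrivals independent of them, and K drawn with probability
  weight_k / (sum_i weight_i) given everything else.\<close>
definition ppr_mech :: "'z measure \<Rightarrow> ('z \<Rightarrow> ennreal) \<Rightarrow> real \<Rightarrow> ((nat \<Rightarrow> 'z) \<times> nat) measure" where
  "ppr_mech Q f \<alpha> =
     distr
       (density (PiM UNIV (\<lambda>_. Q) \<Otimes>\<^sub>M (PiM UNIV (\<lambda>_. exp1) \<Otimes>\<^sub>M count_space UNIV))
          (\<lambda>(z, e, k). ennreal (ppr_weight f \<alpha> z e k) / (\<Sum>i. ennreal (ppr_weight f \<alpha> z e i))))
       (PiM UNIV (\<lambda>_. Q) \<Otimes>\<^sub>M count_space UNIV)
       (\<lambda>(z, e, k). (z, k))"

end

theory Submission
  imports Defs
begin

text \<open>Every PPR output law is the push-forward, under forgetting the arrival times, of one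
  common base measure (i.i.d. samples, i.i.d. Exp(1) gaps, counting measure on the index) with
  density w_k / (\<Sum>i. w_i), where w_i = (f(Z_i) / T_i) powr \<alpha> and f = dP/dQ. Differential
  privacy of P makes the Radon-Nikodym derivatives of neighbouring inputs agree up to a factor
  exp \<epsilon> almost everywhere, so every weight, and with it the normalising sum, changes by at
  most a factor exp (\<alpha> * \<epsilon>). The normalised weight therefore changes by at most
  exp (2 * \<alpha> * \<epsilon>) pointwise on the base space, and integrating this bound over the
  preimage of an event gives the guarantee.\<close>

lemma AE_le_of_nn_integral_indicator_le:
  assumes f: "f \<in> borel_measurable M" and g: "g \<in> borel_measurable M"
    and le: "\<And>A. A \<in> sets M \<Longrightarrow> (\<integral>\<^sup>+x. f x * indicator A x \<partial>M) \<le> (\<integral>\<^sup>+x. g x * indicator A x \<partial>M)"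
    and fin: "integral\<^sup>N M g \<noteq> \<infinity>"
  shows "AE x in M. f x \<le> g x"
proof -
  let ?P = "\<lambda>f A. \<integral>\<^sup>+ x. f x * indicator A x \<partial>M"
  let ?N = "{x\<in>space M. g x < f x}"
  have N: "?N \<in> sets M" using f g by simp
  have "?P g ?N \<le> integral\<^sup>N M g"
    by (intro nn_integral_mono_AE) (auto split: split_indicator)
  then have Pg_fin: "?P g ?N \<noteq> \<infinity>" using fin by (auto simp: top_unique)
  have "?P (\<lambda>x. f x - g x) ?N = (\<integral>\<^sup>+x. f x * indicator ?N x - g x * indicator ?N x \<partial>M)"
    by (auto intro!: nn_integral_cong simp: indicator_def)
  also have "\<dots> = ?P f ?N - ?P g ?N"
    using f g N by (intro nn_integral_diff Pg_fin) (auto split: split_indicator)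
  also have "\<dots> = 0"
    using le[OF N] Pg_fin by (simp add: diff_eq_0_iff_ennreal less_top[symmetric]) (metis top_unique)
  finally show ?thesis
    using f g nn_integral_PInf_AE[OF g fin]
    by (subst (asm) nn_integral_0_iff_AE)
       (auto split: split_indicator simp: not_less ennreal_minus_eq_0)
qed

lemma AE_RN_deriv_le_of_emeasure_le:
  assumes "sigma_finite_measure M"
    and "absolutely_continuous M N" "sets N = sets M"
    and "absolutely_continuous M N'" "sets N' = sets M" "finite_measure N'"
    and le: "\<And>A. A \<in> sets M \<Longrightarrow> emeasure N A \<le> ennreal c * emeasure N' A"
  shows "AE x in M. RN_deriv M N x \<le> ennreal c * RN_deriv M N' x"
proof -
  interpret sigma_finite_measure M by fact
  have density: "emeasure N A = (\<integral>\<^sup>+x. RN_deriv M N x * indicator A x \<partial>M)"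
    "emeasure N' A = (\<integral>\<^sup>+x. RN_deriv M N' x * indicator A x \<partial>M)" if "A \<in> sets M" for A
    using that assms by (simp_all add: emeasure_density[symmetric] density_RN_deriv)
  show ?thesis
  proof (rule AE_le_of_nn_integral_indicator_le)
    fix A assume A: "A \<in> sets M"
    show "(\<integral>\<^sup>+x. RN_deriv M N x * indicator A x \<partial>M)
        \<le> (\<integral>\<^sup>+x. ennreal c * RN_deriv M N' x * indicator A x \<partial>M)"
      using le[OF A] A by (simp add: density nn_integral_cmult mult.assoc)
  next
    have "integral\<^sup>N M (\<lambda>x. ennreal c * RN_deriv M N' x) = ennreal c * emeasure N' (space M)"
      using density(2)[of "space M"] by (simp add: nn_integral_cmult)
    also have "\<dots> < \<infinity>"
      using finite_measure.emeasure_finite[OF \<open>finite_measure N'\<close>, of "space M"]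
      by (simp add: ennreal_mult_less_top less_top)
    finally show "integral\<^sup>N M (\<lambda>x. ennreal c * RN_deriv M N' x) \<noteq> \<infinity>" by simp
  qed simp_all
qed

lemma AE_PiM_all_components:
  assumes "prob_space M" "AE x in M. G x"
  shows "AE \<omega> in PiM UNIV (\<lambda>_::'i::countable. M). \<forall>i. G (\<omega> i)"
  using assms by (simp add: AE_all_countable AE_PiM_component)

lemma AE_pair_measure_fst:
  assumes "sigma_finite_measure M2" "AE x in M1. G x"
  shows "AE y in M1 \<Otimes>\<^sub>M M2. G (fst y)"
proof -
  interpret M2: sigma_finite_measure M2 by fact
  from assms(2) obtain N where N: "{x\<in>space M1. \<not> G x} \<subseteq> N" "N \<in> null_sets M1"
    by (auto elim!: AE_E)
  then have "N \<times> space M2 \<in> null_sets (M1 \<Otimes>\<^sub>M M2)"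
    by (intro M2.times_in_null_sets1) auto
  then show ?thesis
    by (rule AE_I') (use N in \<open>auto simp: space_pair_measure\<close>)
qed

lemma AE_pair_measure_snd:
  assumes "sigma_finite_measure M2" "AE x in M2. G x"
  shows "AE y in M1 \<Otimes>\<^sub>M M2. G (snd y)"
proof -
  interpret M2: sigma_finite_measure M2 by fact
  from assms(2) obtain N where N: "{x\<in>space M2. \<not> G x} \<subseteq> N" "N \<in> null_sets M2"
    by (auto elim!: AE_E)
  then have "space M1 \<times> N \<in> null_sets (M1 \<Otimes>\<^sub>M M2)"
    by (intro M2.times_in_null_sets2) auto
  then show ?thesis
    by (rule AE_I') (use N in \<open>auto simp: space_pair_measure\<close>)
qed

lemma emeasure_distr_density_le:
  assumes [measurable]: "g \<in> borel_measurable M" "g' \<in> borel_measurable M" "h \<in> measurable M N"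
    and le: "AE x in M. g x \<le> c * g' x" and S: "S \<in> sets N"
  shows "emeasure (distr (density M g) N h) S \<le> c * emeasure (distr (density M g') N h) S"
proof -
  let ?R = "h -` S \<inter> space M"
  have [measurable]: "?R \<in> sets M" using S by measurable
  have "emeasure (distr (density M g) N h) S = (\<integral>\<^sup>+x. g x * indicator ?R x \<partial>M)"
    using S by (simp add: emeasure_distr emeasure_density)
  also have "\<dots> \<le> (\<integral>\<^sup>+x. c * g' x * indicator ?R x \<partial>M)"
    using le by (intro nn_integral_mono_AE) (auto elim!: eventually_mono split: split_indicator)
  also have "\<dots> = c * emeasure (distr (density M g') N h) S"
    using S by (simp add: emeasure_distr emeasure_density nn_integral_cmult mult.assoc)
  finally show ?thesis .
qed

lemma suminf_ennreal_le_cmult: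
  fixes a b :: "nat \<Rightarrow> real"
  assumes "0 \<le> c" "\<And>i. 0 \<le> b i" "\<And>i. a i \<le> c * b i"
  shows "(\<Sum>i. ennreal (a i)) \<le> ennreal c * (\<Sum>i. ennreal (b i))"
proof -
  have "(\<Sum>i. ennreal (a i)) \<le> (\<Sum>i. ennreal (c * b i))"
    using assms(3) by (intro suminf_le) (auto intro: ennreal_leI)
  then show ?thesis using assms(1,2) by (simp add: ennreal_mult)
qed

lemma normalized_weight_le:
  fixes a b :: "nat \<Rightarrow> real"
  assumes c: "0 < c" and a0: "\<And>i. 0 \<le> a i" and b0: "\<And>i. 0 \<le> b i"
    and ab: "\<And>i. a i \<le> c * b i" and ba: "\<And>i. b i \<le> c * a i"
  shows "ennreal (a k) / (\<Sum>i. ennreal (a i)) \<le> ennreal (c * c) * (ennreal (b k) / (\<Sum>i. ennreal (b i)))"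
proof -
  let ?A = "\<Sum>i. ennreal (a i)" and ?B = "\<Sum>i. ennreal (b i)"
  have sa: "?A \<le> ennreal c * ?B" and sb: "?B \<le> ennreal c * ?A"
    using c a0 b0 ab ba by (auto intro!: suminf_ennreal_le_cmult)
  have ak: "ennreal (a k) \<le> ?A"
    using sum_le_suminf[OF summableI, of "{k}" "\<lambda>i. ennreal (a i)"] by simp
  show ?thesis
  proof (cases "?A = 0 \<or> ?A = top")
    \<comment> \<open>then \<open>a k = 0\<close> or the divisor is \<open>\<top>\<close>; either way the left side is 0 in \<open>ennreal\<close>\<close>
    case True
    then show ?thesis using ak by (auto simp: ennreal_divide_top)
  next
    case False
    then obtain sA where sA: "?A = ennreal sA" "0 < sA"
      by (cases ?A) (auto simp: zero_less_iff_neq_zero)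
    have "?B \<noteq> 0" using sa sA by auto
    moreover have "?B \<noteq> top" using sb sA c by (auto simp: ennreal_mult[symmetric] top_unique)
    ultimately obtain sB where sB: "?B = ennreal sB" "0 < sB"
      by (cases ?B) (auto simp: zero_less_iff_neq_zero)
    have "sB \<le> c * sA" using sb sA sB c by (simp add: ennreal_mult[symmetric])
    have "a k / sA \<le> (c * b k) / sA" using ab[of k] sA by (simp add: divide_right_mono)
    also have "\<dots> \<le> (c * b k) / (sB / c)"
      using \<open>sB \<le> c * sA\<close> sA sB c b0[of k] by (intro divide_left_mono) (auto simp: field_simps)
    also have "\<dots> = c * c * (b k / sB)" using c sB by (simp add: field_simps)
    finally show ?thesis using sA sB a0[of k] b0[of k] c
      by (simp add: divide_ennreal ennreal_mult[symmetric] ennreal_leI)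
  qed
qed

lemma ppr_weight_le:
  assumes "\<And>j. 0 \<le> e j" "0 \<le> c" "0 \<le> \<alpha>"
    and "f (z k) \<le> ennreal c * g (z k)" "g (z k) \<noteq> \<infinity>"
  shows "ppr_weight f \<alpha> z e k \<le> c powr \<alpha> * ppr_weight g \<alpha> z e k"
proof -
  have T: "0 \<le> ppr_T e k" unfolding ppr_T_def using assms(1) by (simp add: sum_nonneg)
  have "enn2real (f (z k)) \<le> enn2real (ennreal c * g (z k))"
    using assms(4,5) by (intro enn2real_mono) (auto simp: ennreal_mult_less_top less_top)
  then have "enn2real (f (z k)) / ppr_T e k \<le> c * (enn2real (g (z k)) / ppr_T e k)"
    using assms(2) T by (simp add: enn2real_mult divide_right_mono)
  then have "ppr_weight f \<alpha> z e k \<le> (c * (enn2real (g (z k)) / ppr_T e k)) powr \<alpha>"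
    unfolding ppr_weight_def using assms(3) T by (intro powr_mono2) auto
  also have "\<dots> = c powr \<alpha> * ppr_weight g \<alpha> z e k"
    unfolding ppr_weight_def using assms(2) T by (intro powr_mult)
  finally show ?thesis .
qed

lemma exp1_prob_space: "prob_space exp1"
  unfolding exp1_def using prob_space_exponential_density[of 1] by simp

lemma AE_exp1_nonneg: "AE t in exp1. 0 \<le> t"
  unfolding exp1_def by (subst AE_density) (auto simp: exponential_density_def)

definition ppr_space :: "'z measure \<Rightarrow> ((nat \<Rightarrow> 'z) \<times> (nat \<Rightarrow> real) \<times> nat) measure" where
  "ppr_space Q = PiM UNIV (\<lambda>_. Q) \<Otimes>\<^sub>M (PiM UNIV (\<lambda>_. exp1) \<Otimes>\<^sub>M count_space UNIV)"

definition ppr_density :: "('z \<Rightarrow> ennreal) \<Rightarrow> real \<Rightarrow> (nat \<Rightarrow> 'z) \<times> (nat \<Rightarrow> real) \<times> nat \<Rightarrow> ennreal" where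
  "ppr_density f \<alpha> = (\<lambda>(z, e, k). ennreal (ppr_weight f \<alpha> z e k) / (\<Sum>i. ennreal (ppr_weight f \<alpha> z e i)))"

lemma ppr_mech_eq_distr_density:
  "ppr_mech Q f \<alpha> =
     distr (density (ppr_space Q) (ppr_density f \<alpha>)) (PiM UNIV (\<lambda>_. Q) \<Otimes>\<^sub>M count_space UNIV)
       (\<lambda>(z, e, k). (z, k))"
  unfolding ppr_mech_def ppr_space_def ppr_density_def ..

lemma ppr_density_measurable [measurable]:
  assumes [measurable]: "f \<in> borel_measurable Q"
  shows "ppr_density f \<alpha> \<in> borel_measurable (ppr_space Q)"
proof -
  let ?B = "PiM UNIV (\<lambda>_. Q) \<Otimes>\<^sub>M (PiM UNIV (\<lambda>_. exp1) \<Otimes>\<^sub>M count_space (UNIV :: nat set))"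
  have [measurable]: "(\<lambda>y. fst (snd y) j) \<in> borel_measurable ?B" for j
    using measurable_cong_sets[OF refl, of exp1 borel] unfolding exp1_def by measurable
  have [measurable]: "(\<lambda>y. ppr_T (fst (snd y)) i) \<in> borel_measurable ?B" for i
    unfolding ppr_T_def by measurable
  have [measurable]: "(\<lambda>y. ppr_weight f \<alpha> (fst y) (fst (snd y)) i) \<in> borel_measurable ?B" for i
    unfolding ppr_weight_def by (intro powr_real_measurable) measurable
  have "(\<lambda>y. ennreal (ppr_weight f \<alpha> (fst y) (fst (snd y)) (snd (snd y)))) \<in> borel_measurable ?B"
    by (rule measurable_compose_countable'[where g="\<lambda>y. snd (snd y)" and I=UNIV]) auto
  then show ?thesis
    unfolding ppr_density_def ppr_space_def by (simp add: case_prod_beta') measurable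
qed

lemma ppr_density_le:
  assumes "0 < c" "0 \<le> \<alpha>"
    and "\<And>i. f (z i) \<le> ennreal c * g (z i) \<and> g (z i) \<le> ennreal c * f (z i)
      \<and> f (z i) \<noteq> \<infinity> \<and> g (z i) \<noteq> \<infinity>"
    and "\<And>j. 0 \<le> e j"
  shows "ppr_density f \<alpha> (z, e, k) \<le> ennreal (c powr (2 * \<alpha>)) * ppr_density g \<alpha> (z, e, k)"
proof -
  have "ppr_density f \<alpha> (z, e, k) \<le> ennreal (c powr \<alpha> * c powr \<alpha>) * ppr_density g \<alpha> (z, e, k)"
    unfolding ppr_density_def using assms
    by (simp, intro normalized_weight_le ppr_weight_le) (auto simp: ppr_weight_def)
  then show ?thesis by (simp add: powr_add[symmetric])
qed

lemma AE_ppr_space: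
  assumes "prob_space Q" "AE x in Q. G x"
  shows "AE (z, e, k) in ppr_space Q. (\<forall>i. G (z i)) \<and> (\<forall>j. 0 \<le> e j)"
proof -
  let ?E = "PiM UNIV (\<lambda>_::nat. exp1) \<Otimes>\<^sub>M count_space (UNIV :: nat set)"
  have "prob_space (PiM UNIV (\<lambda>_::nat. exp1))"
    by (intro prob_space_PiM exp1_prob_space)
  then have E: "sigma_finite_measure ?E"
    by (intro sigma_finite_pair_measure sigma_finite_measure_count_space prob_space_imp_sigma_finite)
  have "AE y in ppr_space Q. \<forall>i. G (fst y i)"
    unfolding ppr_space_def by (rule AE_pair_measure_fst[OF E AE_PiM_all_components[OF assms]])
  moreover have "AE y in ppr_space Q. \<forall>j. 0 \<le> fst (snd y) j"
    unfolding ppr_space_def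
    by (intro AE_pair_measure_snd[OF E] AE_pair_measure_fst[OF sigma_finite_measure_count_space]
        AE_PiM_all_components[OF exp1_prob_space AE_exp1_nonneg])
  ultimately show ?thesis by eventually_elim auto
qed

lemma AE_RN_deriv_le_of_dp_mech:
  assumes "prob_space Q" and "N \<subseteq> space X \<times> space X"
    and "P \<in> measurable X (prob_algebra Q)"
    and "\<And>x. x \<in> space X \<Longrightarrow> absolutely_continuous Q (P x)"
    and "dp_mech N P \<epsilon> 0" and "(x, x') \<in> N"
  shows "AE z in Q. RN_deriv Q (P x) z \<le> ennreal (exp \<epsilon>) * RN_deriv Q (P x') z
    \<and> RN_deriv Q (P x') z \<noteq> \<infinity>"
proof -
  interpret Q: prob_space Q by fact
  have X: "x \<in> space X" "x' \<in> space X" using assms(2,6) by auto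
  have P: "prob_space (P y)" "sets (P y) = sets Q" if "y \<in> space X" for y
    using measurable_space[OF assms(3) that] by (auto simp: space_prob_algebra)
  have "AE z in Q. RN_deriv Q (P x) z \<le> ennreal (exp \<epsilon>) * RN_deriv Q (P x') z"
    using assms(4-6) X P unfolding dp_mech_def
    by (intro AE_RN_deriv_le_of_emeasure_le prob_space_imp_sigma_finite prob_space.finite_measure)
       (fastforce simp: Q.prob_space_axioms)+
  moreover have "AE z in Q. RN_deriv Q (P x') z \<noteq> \<infinity>"
    using X P assms(4) by (intro Q.RN_deriv_finite prob_space_imp_sigma_finite) auto
  ultimately show ?thesis by eventually_elim simp
qed

theorem theorem2:
  fixes X :: "'x measure" and Q :: "'z measure" and P :: "'x \<Rightarrow> 'z measure"
    and N :: "('x \<times> 'x) set" and \<epsilon> \<alpha> :: real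
  assumes "prob_space Q"
    and "N \<subseteq> space X \<times> space X" and "sym N"
    and "P \<in> measurable X (prob_algebra Q)"
    and "\<And>x. x \<in> space X \<Longrightarrow> absolutely_continuous Q (P x)"
    and "dp_mech N P \<epsilon> 0"
    and "\<alpha> > 1"
  shows "dp_mech N (\<lambda>x. ppr_mech Q (RN_deriv Q (P x)) \<alpha>) (2 * \<alpha> * \<epsilon>) 0"
  unfolding dp_mech_def
proof (intro ballI, clarify)
  let ?f = "\<lambda>x. RN_deriv Q (P x)"
  fix x x' S assume xx': "(x, x') \<in> N" and S: "S \<in> sets (ppr_mech Q (?f x) \<alpha>)"
  have "(x', x) \<in> N" using xx' assms(3) by (auto dest: symD)
  then have "AE z in Q. ?f x z \<le> ennreal (exp \<epsilon>) * ?f x' z \<and> ?f x' z \<le> ennreal (exp \<epsilon>) * ?f x z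
      \<and> ?f x z \<noteq> \<infinity> \<and> ?f x' z \<noteq> \<infinity>"
    using xx' AE_RN_deriv_le_of_dp_mech[OF assms(1,2,4,5,6)] by (auto intro: eventually_conj)
  from AE_ppr_space[OF assms(1) this]
  have "AE y in ppr_space Q. ppr_density (?f x) \<alpha> y \<le> ennreal (exp \<epsilon> powr (2 * \<alpha>)) * ppr_density (?f x') \<alpha> y"
    \<comment> \<open>only \<open>0 \<le> \<alpha>\<close> is needed here, not \<open>\<alpha> > 1\<close>\<close>
    by eventually_elim (use assms(7) in \<open>auto intro!: ppr_density_le\<close>)
  then have "emeasure (ppr_mech Q (?f x) \<alpha>) S \<le> ennreal (exp \<epsilon> powr (2 * \<alpha>)) * emeasure (ppr_mech Q (?f x') \<alpha>) S"
    using S unfolding ppr_mech_eq_distr_density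
    by (intro emeasure_distr_density_le ppr_density_measurable borel_measurable_RN_deriv)
       (simp_all add: ppr_space_def)
  then show "emeasure (ppr_mech Q (?f x) \<alpha>) S \<le> ennreal (exp (2 * \<alpha> * \<epsilon>)) * emeasure (ppr_mech Q (?f x') \<alpha>) S + ennreal 0"
    by (simp add: powr_def mult_ac)
qed

end
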